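(* Let $M,P$ be positive integers, let $\Gamma$ be the set of positive 1-1 vectors in $\{-1,0,1,\dots,M\}^P$, let $\eta_i(j)>0$ for $i\in\{1,\dots,P\}$, $j\in\{-1,\dots,M\}$ be as in the context, and let $\pi$ be the target distribution $\pi(\gamma)\propto 1_{\Gamma}(\gamma)\prod_{i=1}^P\eta_i(\gamma_i)$. Consider the Gibbs sampler on $\Gamma$ with transition kernel $$\pi(\gamma'|\gamma)=\prod_{n=1}^P\pi_n(\gamma'_n|\gamma'_1,\dots,\gamma'_{n-1},\gamma_{n+1},\dots,\gamma_P),$$ where, writing $\bar n=\{1,\dots,P\}\setminus\{n\}$ and $\gamma_{\bar n}$ for the vector with the $n$-th coordinate removed, the conditionals are given by $$\pi_n(\gamma_n|\gamma_{\bar n})\propto\eta_n(\gamma_n)\prod_{i\in\bar n}\big(1-1_{\{1,\dots,M\}}(\gamma_n)\,\delta_{\gamma_n}[\gamma_i]\big).$$ Then, starting from any initial state in $\Gamma$, the sampler converges to $\pi$ at an exponential rate: letting $\pi^j(\gamma'|\gamma)$ denote the $j$-step transition probabilities and $\beta=\min_{\gamma,\gamma'\in\Gamma}\pi^2(\gamma'|\gamma)$, one has $\beta>0$ and for every $j\ge1$ $$\max_{\gamma,\gamma'\in\Gamma}\big|\pi^j(\gamma'|\gamma)-\pi(\gamma')\big|\le(1-2\beta)^{\lfloor j/2\rfloor}.$$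
   Context: A vector $\gamma\in\{-1,\dots,M\}^P$ is positive 1-1 if there are no distinct $i,i'$ with $\gamma_i=\gamma_{i'}>0$. $1_S$ is the indicator of $S$; $\delta_a[b]=1$ if $a=b$ and $0$ otherwise. In the paper the weights arise as follows: given labels $\ell_1,\dots,\ell_R$ of existing objects and birth labels $\ell_{R+1},\dots,\ell_P$, expected survival probabilities $\bar P_S(\ell_i)\in(0,1)$ ($i\le R$), birth probabilities $r_B(\ell_i)$ ($i>R$), and positive quantities $\bar\psi^{(j)}(\ell_i)$ (predicted likelihood of label $\ell_i$ being misdetected, $j=0$, or generating measurement $j\in\{1,\dots,M\}$), one sets $\eta_i(j)=1-\bar P_S(\ell_i)$ if $i\le R$, $j<0$; $\eta_i(j)=\bar P_S(\ell_i)\bar\psi^{(j)}(\ell_i)$ if $i\le R$, $j\ge0$; $\eta_i(j)=1-r_B(\ell_i)$ if $i>R$, $j<0$; $\eta_i(j)=r_B(\ell_i)\bar\psi^{(j)}(\ell_i)$ if $i>R$, $j\ge0$. These are assumed to satisfy $\eta_i(j)>0$ for all $i,j$. *)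

theory Defs
  imports Complex_Main
begin

text \<open>Vectors gamma in {-1,...,M}^P are lists of length P (coordinates indexed 0..P-1).\<close>

definition pos11 :: "int list \<Rightarrow> bool" where
  "pos11 g \<longleftrightarrow> (\<forall>i<length g. \<forall>i'<length g. i \<noteq> i' \<and> g ! i = g ! i' \<longrightarrow> g ! i \<le> 0)"

definition Gam :: "nat \<Rightarrow> nat \<Rightarrow> int list set" where
  "Gam M P = {g. length g = P \<and> set g \<subseteq> {-1..int M} \<and> pos11 g}"

definition weight :: "nat \<Rightarrow> (nat \<Rightarrow> int \<Rightarrow> real) \<Rightarrow> int list \<Rightarrow> real" where
  "weight P eta g = (\<Prod>i<P. eta i (g ! i))"

definition target :: "nat \<Rightarrow> nat \<Rightarrow> (nat \<Rightarrow> int \<Rightarrow> real) \<Rightarrow> int list \<Rightarrow> real" where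
  "target M P eta g =
     (if g \<in> Gam M P then weight P eta g / (\<Sum>h\<in>Gam M P. weight P eta h) else 0)"

text \<open>Unnormalised conditional weight of value c for coordinate n, given the other
  coordinates of d (coordinate n of d is ignored).\<close>
definition cond_w :: "nat \<Rightarrow> nat \<Rightarrow> (nat \<Rightarrow> int \<Rightarrow> real) \<Rightarrow> nat \<Rightarrow> int list \<Rightarrow> int \<Rightarrow> real" where
  "cond_w M P eta n d c =
     eta n c * (\<Prod>i\<in>{..<P} - {n}.
        (1 - (if c \<in> {1..int M} then 1 else 0) * (if c = d ! i then 1 else 0)))"

definition cond_prob :: "nat \<Rightarrow> nat \<Rightarrow> (nat \<Rightarrow> int \<Rightarrow> real) \<Rightarrow> nat \<Rightarrow> int list \<Rightarrow> int \<Rightarrow> real" where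
  "cond_prob M P eta n d c =
     cond_w M P eta n d c / (\<Sum>c'\<in>{-1..int M}. cond_w M P eta n d c')"

text \<open>One systematic-scan Gibbs sweep: coordinate n is drawn conditionally on the
  already updated coordinates 0..n-1 of g' and the old coordinates n+1..P-1 of g.\<close>
definition gibbs_kernel :: "nat \<Rightarrow> nat \<Rightarrow> (nat \<Rightarrow> int \<Rightarrow> real) \<Rightarrow> int list \<Rightarrow> int list \<Rightarrow> real" where
  "gibbs_kernel M P eta g g' =
     (if g' \<in> Gam M P then
        (\<Prod>n<P. cond_prob M P eta n (take n g' @ drop n g) (g' ! n))
      else 0)"

fun gibbs_pow :: "nat \<Rightarrow> nat \<Rightarrow> (nat \<Rightarrow> int \<Rightarrow> real) \<Rightarrow> nat \<Rightarrow> int list \<Rightarrow> int list \<Rightarrow> real" where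
  "gibbs_pow M P eta 0 g g' = (if g = g' then 1 else 0)"
| "gibbs_pow M P eta (Suc j) g g' =
     (\<Sum>d\<in>Gam M P. gibbs_pow M P eta j g d * gibbs_kernel M P eta d g')"

end

theory Submission
  imports Defs
begin

text \<open>A sweep is the composition of the P single-site updates. Each update leaves the
  unnormalised target (extended by zero to the whole box {-1..M}^P) invariant, because along
  a coordinate line the target factorises into the conditional weight of that coordinate times
  a factor independent of it; and sweeps started in the positive 1-1 vectors stay there.
  From every state one sweep reaches the all-zero vector with positive probability, and from
  the all-zero vector every state is reachable, so the two-step kernel is bounded below by
  some \<beta> > 0. Averaging against rows bounded below by \<beta> contracts the oscillation of any
  function by the factor 1 - 2\<beta> (Doeblin), which gives the geometric bound.\<close>

section \<open>Finite stochastic kernels\<close>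

definition kernel_comp ::
    "'a set \<Rightarrow> ('a \<Rightarrow> 'a \<Rightarrow> real) \<Rightarrow> ('a \<Rightarrow> 'a \<Rightarrow> real) \<Rightarrow> 'a \<Rightarrow> 'a \<Rightarrow> real" where
  "kernel_comp S K L x z = (\<Sum>y\<in>S. K x y * L y z)"

definition stochastic_on :: "'a set \<Rightarrow> ('a \<Rightarrow> 'a \<Rightarrow> real) \<Rightarrow> bool" where
  "stochastic_on S K \<longleftrightarrow> (\<forall>x\<in>S. \<forall>y\<in>S. 0 \<le> K x y) \<and> (\<forall>x\<in>S. (\<Sum>y\<in>S. K x y) = 1)"

definition invariant_on :: "'a set \<Rightarrow> ('a \<Rightarrow> real) \<Rightarrow> ('a \<Rightarrow> 'a \<Rightarrow> real) \<Rightarrow> bool" where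
  "invariant_on S \<mu> K \<longleftrightarrow> (\<forall>y\<in>S. (\<Sum>x\<in>S. \<mu> x * K x y) = \<mu> y)"

definition id_kernel :: "'a \<Rightarrow> 'a \<Rightarrow> real" where
  "id_kernel x y = (if x = y then 1 else 0)"

lemma stochastic_on_id_kernel: "finite S \<Longrightarrow> stochastic_on S id_kernel"
  by (simp add: stochastic_on_def id_kernel_def)

lemma invariant_on_id_kernel: "finite S \<Longrightarrow> invariant_on S \<mu> id_kernel"
  by (simp add: invariant_on_def id_kernel_def if_distrib cong: if_cong)

lemma kernel_comp_id_kernel_right:
  "finite S \<Longrightarrow> z \<in> S \<Longrightarrow> kernel_comp S K id_kernel x z = K x z"
  by (simp add: kernel_comp_def id_kernel_def if_distrib cong: if_cong)

lemma kernel_comp_assoc: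
  "kernel_comp S (kernel_comp S K L) N x z = kernel_comp S K (kernel_comp S L N) x z"
  unfolding kernel_comp_def sum_distrib_left sum_distrib_right
  by (subst sum.swap) (simp add: mult.assoc)

lemma stochastic_on_kernel_comp:
  assumes "finite S" "stochastic_on S K" "stochastic_on S L"
  shows "stochastic_on S (kernel_comp S K L)"
proof -
  have "(\<Sum>z\<in>S. kernel_comp S K L x z) = (\<Sum>y\<in>S. K x y * (\<Sum>z\<in>S. L y z))" for x
    unfolding kernel_comp_def sum_distrib_left by (rule sum.swap)
  then show ?thesis
    using assms by (auto simp: stochastic_on_def kernel_comp_def intro!: sum_nonneg)
qed

lemma invariant_on_kernel_comp:
  assumes "invariant_on S \<mu> K" "invariant_on S \<mu> L"
  shows "invariant_on S \<mu> (kernel_comp S K L)"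
proof -
  have "(\<Sum>x\<in>S. \<mu> x * kernel_comp S K L x z) = (\<Sum>y\<in>S. (\<Sum>x\<in>S. \<mu> x * K x y) * L y z)" for z
    unfolding kernel_comp_def sum_distrib_left sum_distrib_right
    by (subst sum.swap) (simp add: mult.assoc)
  then show ?thesis
    using assms by (simp add: invariant_on_def)
qed

lemma stochastic_on_le_one:
  assumes "finite S" "stochastic_on S K" "x \<in> S" "y \<in> S"
  shows "K x y \<le> 1"
proof -
  have "K x y \<le> (\<Sum>y\<in>S. K x y)"
    using assms by (intro member_le_sum) (auto simp: stochastic_on_def)
  then show ?thesis
    using assms by (simp add: stochastic_on_def)
qed

fun kernel_pow :: "'a set \<Rightarrow> ('a \<Rightarrow> 'a \<Rightarrow> real) \<Rightarrow> nat \<Rightarrow> 'a \<Rightarrow> 'a \<Rightarrow> real" where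
  "kernel_pow S K 0 = id_kernel"
| "kernel_pow S K (Suc j) = kernel_comp S (kernel_pow S K j) K"

lemma convex_sum_le_max_sub_mass:
  fixes q f :: "'a \<Rightarrow> real"
  assumes "finite S" "\<And>d. d \<in> S \<Longrightarrow> 0 \<le> q d" "sum q S = 1"
    and "y \<in> S" "\<beta> \<le> q y" "\<And>d. d \<in> S \<Longrightarrow> f d \<le> u"
  shows "(\<Sum>d\<in>S. q d * f d) \<le> u - \<beta> * (u - f y)"
proof -
  have "(\<Sum>d\<in>S. q d * f d) = u - (\<Sum>d\<in>S. q d * (u - f d))"
    using assms(3) by (simp add: algebra_simps sum_subtractf flip: sum_distrib_left)
  also have "q y * (u - f y) \<le> (\<Sum>d\<in>S. q d * (u - f d))"
    using assms by (intro member_le_sum) auto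
  moreover have "\<beta> * (u - f y) \<le> q y * (u - f y)"
    using assms by (intro mult_right_mono) auto
  ultimately show ?thesis
    by linarith
qed

locale stochastic_kernel =
  fixes S :: "'a set" and K :: "'a \<Rightarrow> 'a \<Rightarrow> real"
  assumes finite_S: "finite S" and stochastic: "stochastic_on S K"
begin

lemma stochastic_on_kernel_pow: "stochastic_on S (kernel_pow S K j)"
  by (induction j) (simp_all add: finite_S stochastic stochastic_on_id_kernel stochastic_on_kernel_comp)

lemma invariant_on_kernel_pow: "invariant_on S \<mu> K \<Longrightarrow> invariant_on S \<mu> (kernel_pow S K j)"
  by (induction j) (simp_all add: finite_S invariant_on_id_kernel invariant_on_kernel_comp)

lemma kernel_pow_add:
  "z \<in> S \<Longrightarrow> kernel_pow S K (i + j) x z = kernel_comp S (kernel_pow S K i) (kernel_pow S K j) x z"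
proof (induction j arbitrary: z)
  case 0
  then show ?case
    by (simp add: finite_S kernel_comp_id_kernel_right)
next
  case (Suc j)
  then have "kernel_pow S K (i + Suc j) x z
      = kernel_comp S (kernel_comp S (kernel_pow S K i) (kernel_pow S K j)) K x z"
    by (simp add: kernel_comp_def)
  then show ?case
    by (simp add: kernel_comp_assoc)
qed

lemma kernel_pow_nonneg: "x \<in> S \<Longrightarrow> y \<in> S \<Longrightarrow> 0 \<le> kernel_pow S K j x y"
  using stochastic_on_kernel_pow by (simp add: stochastic_on_def)

lemma kernel_pow_le_one: "x \<in> S \<Longrightarrow> y \<in> S \<Longrightarrow> kernel_pow S K j x y \<le> 1"
  by (rule stochastic_on_le_one[OF finite_S stochastic_on_kernel_pow])

lemma kernel_pow_two:
  assumes "x \<in> S"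
  shows "kernel_pow S K 2 x z = kernel_comp S K K x z"
proof -
  have "kernel_pow S K 1 x y = K x y" for y
    using assms
    by (simp add: kernel_comp_def id_kernel_def finite_S if_distrib[of "\<lambda>t. t * _"] cong: if_cong)
  then show ?thesis
    by (simp add: numeral_2_eq_2 kernel_comp_def)
qed

lemma stochastic_on_average_diff_le:
  assumes "stochastic_on S Q" "\<And>x y. x \<in> S \<Longrightarrow> y \<in> S \<Longrightarrow> \<beta> \<le> Q x y"
    and "y0 \<in> S" "y1 \<in> S" "\<And>d. d \<in> S \<Longrightarrow> f y0 \<le> f d \<and> f d \<le> f y1"
    and "x \<in> S" "x' \<in> S"
  shows "(\<Sum>d\<in>S. Q x d * f d) - (\<Sum>d\<in>S. Q x' d * f d) \<le> (1 - 2 * \<beta>) * (f y1 - f y0)"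
proof -
  have "(\<Sum>d\<in>S. Q x d * f d) \<le> f y1 - \<beta> * (f y1 - f y0)"
    using assms by (intro convex_sum_le_max_sub_mass[OF finite_S]) (auto simp: stochastic_on_def)
  moreover have "(\<Sum>d\<in>S. Q x' d * - f d) \<le> - f y0 - \<beta> * (- f y0 - - f y1)"
    using assms by (intro convex_sum_le_max_sub_mass[OF finite_S]) (auto simp: stochastic_on_def)
  ultimately show ?thesis
    by (simp add: sum_negf algebra_simps)
qed

lemma kernel_pow_oscillation:
  assumes \<beta>_le: "\<And>x y. x \<in> S \<Longrightarrow> y \<in> S \<Longrightarrow> \<beta> \<le> kernel_pow S K 2 x y" and "2 * \<beta> \<le> 1"
    and "x \<in> S" "y \<in> S" "z \<in> S"
  shows "kernel_pow S K j x z - kernel_pow S K j y z \<le> (1 - 2 * \<beta>) ^ (j div 2)"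
  using assms(3-)
proof (induction j arbitrary: x y rule: less_induct)
  case (less j)
  show ?case
  proof (cases "j < 2")
    case True
    then show ?thesis
      using less.prems kernel_pow_nonneg[of y z j] kernel_pow_le_one[of x z j] by simp
  next
    case False
    then obtain i where j: "j = 2 + i"
      using le_Suc_ex not_less by blast
    define f where "f d = kernel_pow S K i d z" for d
    obtain y0 where "y0 \<in> S" "\<And>d. d \<in> S \<Longrightarrow> f y0 \<le> f d"
      using ex_is_arg_min_if_finite[OF finite_S, of f] less.prems
      by (auto simp: is_arg_min_linorder)
    moreover obtain y1 where "y1 \<in> S" "\<And>d. d \<in> S \<Longrightarrow> f d \<le> f y1"
      using ex_is_arg_min_if_finite[OF finite_S, of "\<lambda>d. - f d"] less.prems
      by (auto simp: is_arg_min_linorder)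
    ultimately have "kernel_pow S K j x z - kernel_pow S K j y z \<le> (1 - 2 * \<beta>) * (f y1 - f y0)"
      using less.prems \<beta>_le unfolding j kernel_pow_add[OF less.prems(3)] kernel_comp_def f_def
      by (intro stochastic_on_average_diff_le stochastic_on_kernel_pow) auto
    also have "\<dots> \<le> (1 - 2 * \<beta>) * (1 - 2 * \<beta>) ^ (i div 2)"
      using less.IH[of i y1 y0] \<open>y0 \<in> S\<close> \<open>y1 \<in> S\<close> less.prems assms(2)
      unfolding j f_def by (intro mult_left_mono) auto
    finally show ?thesis
      by (simp add: j)
  qed
qed

lemma kernel_pow_distance_to_invariant:
  assumes "\<And>x y. x \<in> S \<Longrightarrow> y \<in> S \<Longrightarrow> \<beta> \<le> kernel_pow S K 2 x y" and "2 * \<beta> \<le> 1"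
    and \<mu>: "\<And>x. x \<in> S \<Longrightarrow> 0 \<le> \<mu> x" "sum \<mu> S = 1" "invariant_on S \<mu> K"
    and "x \<in> S" "z \<in> S"
  shows "\<bar>kernel_pow S K j x z - \<mu> z\<bar> \<le> (1 - 2 * \<beta>) ^ (j div 2)"
proof -
  have "\<mu> z = (\<Sum>y\<in>S. kernel_pow S K j y z * \<mu> y)"
    using invariant_on_kernel_pow[OF \<mu>(3)] \<open>z \<in> S\<close> by (simp add: invariant_on_def mult.commute)
  moreover have "\<bar>(\<Sum>y\<in>S. kernel_pow S K j y z * \<mu> y) - kernel_pow S K j x z\<bar> \<le> (1 - 2 * \<beta>) ^ (j div 2)"
    using assms kernel_pow_oscillation[of \<beta>]
    by (intro convex_sum_bound_le) (auto simp: abs_le_iff)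
  ultimately show ?thesis
    by (simp add: abs_minus_commute)
qed

theorem kernel_pow_geometric_convergence:
  assumes "a \<in> S" "b \<in> S" "a \<noteq> b"
    and \<mu>: "\<And>x. x \<in> S \<Longrightarrow> 0 \<le> \<mu> x" "sum \<mu> S = 1" "invariant_on S \<mu> K"
    and pos: "\<And>x y. x \<in> S \<Longrightarrow> y \<in> S \<Longrightarrow> 0 < kernel_pow S K 2 x y"
  defines "\<beta> \<equiv> Min {kernel_pow S K 2 x y | x y. x \<in> S \<and> y \<in> S}"
  shows "0 < \<beta> \<and> (\<forall>j. \<forall>x\<in>S. \<forall>z\<in>S. \<bar>kernel_pow S K j x z - \<mu> z\<bar> \<le> (1 - 2 * \<beta>) ^ (j div 2))"
proof -
  have \<beta>_set: "{kernel_pow S K 2 x y | x y. x \<in> S \<and> y \<in> S} = (\<lambda>(x, y). kernel_pow S K 2 x y) ` (S \<times> S)"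
    by auto
  have \<beta>_pos: "0 < \<beta>"
    unfolding \<beta>_def \<beta>_set using finite_S assms(1) pos by (subst Min_gr_iff) auto
  have \<beta>_le: "\<beta> \<le> kernel_pow S K 2 x y" if "x \<in> S" "y \<in> S" for x y
    unfolding \<beta>_def \<beta>_set using finite_S that by (intro Min_le) auto
  have "kernel_pow S K 2 a a + kernel_pow S K 2 a b = (\<Sum>y\<in>{a, b}. kernel_pow S K 2 a y)"
    using assms(3) by simp
  also have "\<dots> \<le> (\<Sum>y\<in>S. kernel_pow S K 2 a y)"
    using assms(1,2) finite_S kernel_pow_nonneg by (intro sum_mono2) auto
  also have "\<dots> = 1"
    using stochastic_on_kernel_pow assms(1) by (simp add: stochastic_on_def)
  finally have "2 * \<beta> \<le> 1"
    using \<beta>_le[of a a] \<beta>_le[of a b] assms(1,2) by linarith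
  then show ?thesis
    using \<beta>_pos \<beta>_le \<mu> kernel_pow_distance_to_invariant by blast
qed

end

section \<open>Vectors in {-1..M}^P\<close>

lemma eq_list_update_iff:
  assumes "length h = length x" "n < length x"
  shows "h = x[n := h ! n] \<longleftrightarrow> take n h = take n x \<and> drop (Suc n) h = drop (Suc n) x"
  using assms id_take_nth_drop[of n h] upd_conv_take_nth_drop[of n x "h ! n"]
  by (metis append_eq_append_conv length_take list.inject)

lemma eq_list_update_sym: "length x = length y \<Longrightarrow> y = x[n := y ! n] \<longleftrightarrow> x = y[n := x ! n]"
  by (metis list_update_id list_update_overwrite)

lemma drop_eq_and_eq_list_update_iff:
  assumes "length x = length g" "length h = length g" "n < length g"
  shows "drop n x = drop n g \<and> h = x[n := h ! n] \<longleftrightarrow>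
    x = take n h @ drop n g \<and> drop (Suc n) h = drop (Suc n) g"
proof -
  have drop_Suc_tl: "drop (Suc n) xs = tl (drop n xs)" for xs :: "'a list"
    by (simp add: drop_Suc drop_tl)
  show ?thesis
  proof
    assume a: "drop n x = drop n g \<and> h = x[n := h ! n]"
    then have "take n h = take n x" "drop (Suc n) h = drop (Suc n) x"
      using assms eq_list_update_iff[of h x n] by simp_all
    then show "x = take n h @ drop n g \<and> drop (Suc n) h = drop (Suc n) g"
      using a drop_Suc_tl by (metis append_take_drop_id)
  next
    assume b: "x = take n h @ drop n g \<and> drop (Suc n) h = drop (Suc n) g"
    then have "drop n x = drop n g" "take n x = take n h"
      using assms by simp_all
    moreover have "drop (Suc n) x = drop (Suc n) g"
      using \<open>drop n x = drop n g\<close> drop_Suc_tl by metis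
    ultimately show "drop n x = drop n g \<and> h = x[n := h ! n]"
      using b assms eq_list_update_iff[of h x n] by simp
  qed
qed

definition Box :: "nat \<Rightarrow> nat \<Rightarrow> int list set" where
  "Box M P = {g. length g = P \<and> set g \<subseteq> {-1..int M}}"

lemma finite_Box: "finite (Box M P)"
proof -
  have "Box M P = {xs. set xs \<subseteq> {-1..int M} \<and> length xs = P}"
    by (auto simp: Box_def)
  then show ?thesis
    using finite_lists_length_eq[OF finite_atLeastAtMost_int] by simp
qed

lemma Gam_eq_Box: "Gam M P = {g \<in> Box M P. pos11 g}"
  by (auto simp: Gam_def Box_def)

lemma Gam_subset_Box: "Gam M P \<subseteq> Box M P"
  by (simp add: Gam_eq_Box)

lemma finite_Gam: "finite (Gam M P)"
  using finite_subset[OF Gam_subset_Box finite_Box] .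

lemma replicate_in_Gam: "c \<in> {-1, 0} \<Longrightarrow> replicate P c \<in> Gam M P"
  by (auto simp: Gam_def pos11_def)

lemma Box_nth: "x \<in> Box M P \<Longrightarrow> i < P \<Longrightarrow> x ! i \<in> {-1..int M}"
  unfolding Box_def using nth_mem by blast

lemma Box_list_update: "x \<in> Box M P \<Longrightarrow> c \<in> {-1..int M} \<Longrightarrow> x[n := c] \<in> Box M P"
  using set_update_subset_insert[of x n c] by (auto simp: Box_def)

lemma Box_take_append_drop: "g \<in> Box M P \<Longrightarrow> h \<in> Box M P \<Longrightarrow> take n h @ drop n g \<in> Box M P"
  using set_take_subset[of n h] set_drop_subset[of n g] by (auto simp: Box_def)

definition pos11_except :: "nat \<Rightarrow> int list \<Rightarrow> bool" where
  "pos11_except n x \<longleftrightarrow>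
     (\<forall>i<length x. \<forall>i'<length x. i \<noteq> n \<and> i' \<noteq> n \<and> i \<noteq> i' \<and> x ! i = x ! i' \<longrightarrow> x ! i \<le> 0)"

lemma pos11_imp_pos11_except: "pos11 x \<Longrightarrow> pos11_except n x"
  by (simp add: pos11_def pos11_except_def)

lemma pos11_list_update_iff:
  assumes "n < length x"
  shows "pos11 (x[n := c]) \<longleftrightarrow> pos11_except n x \<and> \<not> (0 < c \<and> (\<exists>i<length x. i \<noteq> n \<and> x ! i = c))"
  using assms unfolding pos11_def pos11_except_def
  by (auto simp: nth_list_update) (metis)+

section \<open>The systematic-scan Gibbs sweep\<close>

lemma if_zero_mult_if_zero:
  "(if A then a else 0) * (if B then b else 0) = (if A \<and> B then a * b else (0 :: 'a :: mult_zero))"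
  by simp

lemma prod_one_minus_indicator:
  "finite A \<Longrightarrow> (\<Prod>i\<in>A. 1 - (if Q then 1 else 0) * (if c = d i then 1 else 0) :: real)
      = (if Q \<and> (\<exists>i\<in>A. c = d i) then 0 else 1)"
  by (induction A rule: finite_induct) auto

lemma cond_w_eq:
  "cond_w M P eta n d c = (if c \<in> {1..int M} \<and> (\<exists>i\<in>{..<P} - {n}. c = d ! i) then 0 else eta n c)"
  unfolding cond_w_def by (subst prod_one_minus_indicator) auto

lemma cond_prob_list_update: "cond_prob M P eta n (d[n := a]) = cond_prob M P eta n d"
  by (simp add: fun_eq_iff cond_prob_def cond_w_eq)

locale gibbs_sampler =
  fixes M P :: nat and eta :: "nat \<Rightarrow> int \<Rightarrow> real"
  assumes eta_pos: "\<And>i j. i < P \<Longrightarrow> j \<in> {-1..int M} \<Longrightarrow> 0 < eta i j"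
begin

abbreviation "cw \<equiv> cond_w M P eta"
abbreviation "cp \<equiv> cond_prob M P eta"

lemma cond_w_nonneg: "n < P \<Longrightarrow> c \<in> {-1..int M} \<Longrightarrow> 0 \<le> cw n d c"
  using eta_pos[of n c] by (simp add: cond_w_eq)

lemma cond_w_sum_pos: "n < P \<Longrightarrow> 0 < (\<Sum>c\<in>{-1..int M}. cw n d c)"
proof -
  assume n: "n < P"
  have "cw n d (-1) \<le> (\<Sum>c\<in>{-1..int M}. cw n d c)"
    using n cond_w_nonneg by (intro member_le_sum) auto
  moreover have "0 < cw n d (-1)"
    using eta_pos[OF n, of "-1"] by (simp add: cond_w_eq)
  ultimately show ?thesis
    by linarith
qed

lemma cond_prob_nonneg: "n < P \<Longrightarrow> c \<in> {-1..int M} \<Longrightarrow> 0 \<le> cp n d c"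
  unfolding cond_prob_def using cond_w_nonneg cond_w_sum_pos by (simp add: less_imp_le)

lemma cond_prob_sum: "n < P \<Longrightarrow> (\<Sum>c\<in>{-1..int M}. cp n d c) = 1"
  unfolding cond_prob_def using cond_w_sum_pos[of n d] by (simp flip: sum_divide_distrib)

lemma cond_prob_pos: "n < P \<Longrightarrow> 0 < cw n d c \<Longrightarrow> 0 < cp n d c"
  unfolding cond_prob_def using cond_w_sum_pos by simp

definition target_weight :: "int list \<Rightarrow> real" where
  "target_weight x = (if pos11 x then weight P eta x else 0)"

definition off_site_weight :: "nat \<Rightarrow> int list \<Rightarrow> real" where
  "off_site_weight n x = (if pos11_except n x then \<Prod>i\<in>{..<P} - {n}. eta i (x ! i) else 0)"

lemma weight_list_update:
  assumes "length x = P" "n < P"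
  shows "weight P eta (x[n := c]) = eta n c * (\<Prod>i\<in>{..<P} - {n}. eta i (x ! i))"
proof -
  have "weight P eta (x[n := c]) = eta n c * (\<Prod>i\<in>{..<P} - {n}. eta i (x[n := c] ! i))"
    unfolding weight_def using assms by (subst prod.remove[of _ n]) auto
  also have "(\<Prod>i\<in>{..<P} - {n}. eta i (x[n := c] ! i)) = (\<Prod>i\<in>{..<P} - {n}. eta i (x ! i))"
    by (intro prod.cong) auto
  finally show ?thesis .
qed

lemma target_weight_list_update:
  assumes "x \<in> Box M P" "n < P" "c \<in> {-1..int M}"
  shows "target_weight (x[n := c]) = cw n x c * off_site_weight n x"
proof -
  have "length x = P"
    using assms(1) by (simp add: Box_def)
  moreover have "c \<in> {1..int M} \<longleftrightarrow> 0 < c"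
    using assms(3) by auto
  ultimately show ?thesis
    using assms(2)
    by (auto simp: target_weight_def off_site_weight_def pos11_list_update_iff
        weight_list_update cond_w_eq)
qed

definition site_kernel :: "nat \<Rightarrow> int list \<Rightarrow> int list \<Rightarrow> real" where
  "site_kernel n x h = (if h = x[n := h ! n] then cp n x (h ! n) else 0)"

lemma sum_Box_line:
  assumes "x \<in> Box M P" "n < P"
  shows "(\<Sum>h\<in>Box M P. if h = x[n := h ! n] then F h else 0) = (\<Sum>c\<in>{-1..int M}. F (x[n := c]))"
proof -
  have len: "length x = P"
    using assms(1) by (simp add: Box_def)
  have "{h \<in> Box M P. h = x[n := h ! n]} = (\<lambda>c. x[n := c]) ` {-1..int M}"
  proof (intro equalityI subsetI)
    fix h assume "h \<in> {h \<in> Box M P. h = x[n := h ! n]}"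
    then show "h \<in> (\<lambda>c. x[n := c]) ` {-1..int M}"
      using Box_nth assms by (intro image_eqI[of _ _ "h ! n"]) auto
  next
    fix h assume "h \<in> (\<lambda>c. x[n := c]) ` {-1..int M}"
    then show "h \<in> {h \<in> Box M P. h = x[n := h ! n]}"
      using assms len Box_list_update by auto
  qed
  moreover have "inj_on (\<lambda>c. x[n := c]) {-1..int M}"
    using assms len by (auto simp: inj_on_def dest: arg_cong[where f = "\<lambda>xs. xs ! n"])
  ultimately show ?thesis
    by (simp add: sum.inter_filter[OF finite_Box, symmetric] sum.reindex)
qed

lemma stochastic_on_site_kernel:
  assumes "n < P"
  shows "stochastic_on (Box M P) (site_kernel n)"
proof -
  have "(\<Sum>h\<in>Box M P. site_kernel n x h) = 1" if "x \<in> Box M P" for x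
    using that assms sum_Box_line[OF that assms, of "\<lambda>h. cp n x (h ! n)"] cond_prob_sum[OF assms]
    by (simp add: site_kernel_def Box_def)
  then show ?thesis
    using assms cond_prob_nonneg Box_nth by (auto simp: stochastic_on_def site_kernel_def)
qed

lemma invariant_on_site_kernel:
  assumes "n < P"
  shows "invariant_on (Box M P) target_weight (site_kernel n)"
  unfolding invariant_on_def
proof
  fix y assume y: "y \<in> Box M P"
  have len: "length x = length y" if "x \<in> Box M P" for x
    using that y by (simp add: Box_def)
  have "(\<Sum>x\<in>Box M P. target_weight x * site_kernel n x y)
      = (\<Sum>x\<in>Box M P. if x = y[n := x ! n] then target_weight x * cp n x (y ! n) else 0)"
  proof (rule sum.cong[OF refl])
    fix x assume "x \<in> Box M P"
    then have "y = x[n := y ! n] \<longleftrightarrow> x = y[n := x ! n]"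
      using len eq_list_update_sym by blast
    then show "target_weight x * site_kernel n x y
        = (if x = y[n := x ! n] then target_weight x * cp n x (y ! n) else 0)"
      by (simp add: site_kernel_def)
  qed
  also have "\<dots> = (\<Sum>c\<in>{-1..int M}. target_weight (y[n := c]) * cp n (y[n := c]) (y ! n))"
    by (rule sum_Box_line[OF y assms])
  also have "\<dots> = (\<Sum>c\<in>{-1..int M}. cw n y c) * (off_site_weight n y * cp n y (y ! n))"
    using y assms by (simp add: target_weight_list_update cond_prob_list_update sum_distrib_right mult.assoc)
  also have "\<dots> = off_site_weight n y * cw n y (y ! n)"
    using cond_w_sum_pos[OF assms, of y] by (simp add: cond_prob_def)
  also have "\<dots> = target_weight y"
    using target_weight_list_update[OF y assms Box_nth[OF y assms]] by simp
  finally show "(\<Sum>x\<in>Box M P. target_weight x * site_kernel n x y) = target_weight y" .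
qed

lemma site_kernel_preserves_pos11:
  assumes "x \<in> Box M P" "pos11 x" "n < P" "site_kernel n x h \<noteq> 0"
  shows "pos11 h"
proof -
  have h: "h = x[n := h ! n]" and nz: "cw n x (h ! n) \<noteq> 0"
    using assms(4) by (auto simp: site_kernel_def cond_prob_def split: if_splits)
  have "\<not> (0 < h ! n \<and> (\<exists>i<length x. i \<noteq> n \<and> x ! i = h ! n))"
  proof
    assume "0 < h ! n \<and> (\<exists>i<length x. i \<noteq> n \<and> x ! i = h ! n)"
    then obtain i where i: "i < P" "i \<noteq> n" "x ! i = h ! n" and "0 < h ! n"
      using assms(1) by (auto simp: Box_def)
    then have "h ! n \<in> {1..int M} \<and> (\<exists>j\<in>{..<P} - {n}. h ! n = x ! j)"
      using Box_nth[OF assms(1) i(1)] by (auto intro!: bexI[of _ i])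
    then show False
      using nz by (simp add: cond_w_eq)
  qed
  then have "pos11 (x[n := h ! n])"
    using assms pos11_imp_pos11_except pos11_list_update_iff[of n x "h ! n"]
    by (simp add: Box_def)
  then show ?thesis
    using h by metis
qed

fun partial_sweep :: "nat \<Rightarrow> int list \<Rightarrow> int list \<Rightarrow> real" where
  "partial_sweep 0 = id_kernel"
| "partial_sweep (Suc n) = kernel_comp (Box M P) (partial_sweep n) (site_kernel n)"

lemma stochastic_on_partial_sweep: "n \<le> P \<Longrightarrow> stochastic_on (Box M P) (partial_sweep n)"
  by (induction n)
    (simp_all add: finite_Box stochastic_on_id_kernel stochastic_on_kernel_comp stochastic_on_site_kernel)

lemma invariant_on_partial_sweep: "n \<le> P \<Longrightarrow> invariant_on (Box M P) target_weight (partial_sweep n)"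
  by (induction n)
    (simp_all add: finite_Box invariant_on_id_kernel invariant_on_kernel_comp invariant_on_site_kernel)

lemma partial_sweep_preserves_pos11:
  assumes "g \<in> Box M P" "pos11 g"
  shows "n \<le> P \<Longrightarrow> partial_sweep n g h \<noteq> 0 \<Longrightarrow> pos11 h"
proof (induction n arbitrary: h)
  case 0
  then show ?case
    using assms(2) by (simp add: id_kernel_def split: if_splits)
next
  case (Suc n)
  then have "(\<Sum>x\<in>Box M P. partial_sweep n g x * site_kernel n x h) \<noteq> 0"
    by (simp add: kernel_comp_def)
  then obtain x where x: "x \<in> Box M P" "partial_sweep n g x * site_kernel n x h \<noteq> 0"
    using sum.not_neutral_contains_not_neutral by blast
  then have "pos11 x"
    using Suc.IH[OF Suc_leD[OF Suc.prems(1)]] by simp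
  then show ?case
    using site_kernel_preserves_pos11[OF x(1)] x(2) Suc.prems(1) by (simp add: Suc_le_eq)
qed

lemma partial_sweep_eq:
  assumes "g \<in> Box M P" "h \<in> Box M P" "n \<le> P"
  shows "partial_sweep n g h =
    (if drop n h = drop n g then \<Prod>m<n. cp m (take m h @ drop m g) (h ! m) else 0)"
  using assms(2,3)
proof (induction n arbitrary: h)
  case 0
  then show ?case
    by (simp add: id_kernel_def)
next
  case (Suc n)
  define x0 where "x0 = take n h @ drop n g"
  define D where "D \<longleftrightarrow> drop (Suc n) h = drop (Suc n) g"
  define \<Pi> where "\<Pi> y = (\<Prod>m<n. cp m (take m y @ drop m g) (y ! m))" for y
  have len: "length x = P" if "x \<in> Box M P" for x
    using that by (simp add: Box_def)
  have "\<Pi> x0 = \<Pi> h"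
    using Suc.prems len[OF assms(1)] len[OF Suc.prems(1)]
    unfolding \<Pi>_def by (intro prod.cong) (auto simp: x0_def nth_append min_def)
  have summand: "partial_sweep n g x * site_kernel n x h = (if x = x0 \<and> D then \<Pi> h * cp n x0 (h ! n) else 0)"
    if x: "x \<in> Box M P" for x
  proof -
    have "partial_sweep n g x * site_kernel n x h
        = (if drop n x = drop n g then \<Pi> x else 0) * (if h = x[n := h ! n] then cp n x (h ! n) else 0)"
      using Suc.IH[OF x] Suc.prems(2) by (simp only: \<Pi>_def site_kernel_def Suc_leD)
    also have "\<dots> = (if drop n x = drop n g \<and> h = x[n := h ! n] then \<Pi> x * cp n x (h ! n) else 0)"
      by (rule if_zero_mult_if_zero)
    also have "\<dots> = (if x = x0 \<and> D then \<Pi> x * cp n x (h ! n) else 0)"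
      using drop_eq_and_eq_list_update_iff[of x g h n] len[OF x] len[OF assms(1)] len[OF Suc.prems(1)] Suc.prems(2)
      unfolding x0_def D_def by (simp only: Suc_le_lessD)
    finally show ?thesis
      using \<open>\<Pi> x0 = \<Pi> h\<close> by simp
  qed
  have "partial_sweep (Suc n) g h = (if D then \<Pi> h * cp n x0 (h ! n) else 0)"
    using Box_take_append_drop[OF assms(1) Suc.prems(1)]
    by (simp add: kernel_comp_def finite_Box summand x0_def cong: sum.cong)
  then show ?case
    by (simp add: x0_def D_def \<Pi>_def)
qed

lemma gibbs_kernel_eq_partial_sweep:
  assumes "g \<in> Box M P"
  shows "gibbs_kernel M P eta g h = (if h \<in> Gam M P then partial_sweep P g h else 0)"
proof (cases "h \<in> Gam M P")
  case True
  then have "h \<in> Box M P" "length h = P" "length g = P"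
    using Gam_subset_Box[of M P] assms by (auto simp: Box_def)
  then show ?thesis
    using True assms by (simp add: gibbs_kernel_def partial_sweep_eq)
qed (simp add: gibbs_kernel_def)

lemma stochastic_on_gibbs_kernel: "stochastic_on (Gam M P) (gibbs_kernel M P eta)"
proof -
  have "(\<Sum>h\<in>Gam M P. gibbs_kernel M P eta g h) = 1" if g: "g \<in> Gam M P" for g
  proof -
    have "(\<Sum>h\<in>Gam M P. gibbs_kernel M P eta g h) = (\<Sum>h\<in>Box M P. partial_sweep P g h)"
      using g Gam_subset_Box[of M P] partial_sweep_preserves_pos11[of g P]
      by (intro sum.mono_neutral_cong_left) (auto simp: finite_Box gibbs_kernel_eq_partial_sweep Gam_eq_Box)
    then show ?thesis
      using g Gam_subset_Box[of M P] stochastic_on_partial_sweep[of P] by (auto simp: stochastic_on_def)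
  qed
  moreover have "0 \<le> gibbs_kernel M P eta g h" if "g \<in> Gam M P" "h \<in> Gam M P" for g h
  proof -
    have "g \<in> Box M P" "h \<in> Box M P"
      using that Gam_subset_Box[of M P] by auto
    then show ?thesis
      using that stochastic_on_partial_sweep[of P] by (simp add: gibbs_kernel_eq_partial_sweep stochastic_on_def)
  qed
  ultimately show ?thesis
    by (simp add: stochastic_on_def)
qed

sublocale stochastic_kernel "Gam M P" "gibbs_kernel M P eta"
  using finite_Gam stochastic_on_gibbs_kernel by unfold_locales

lemma weight_pos: "x \<in> Box M P \<Longrightarrow> 0 < weight P eta x"
  unfolding weight_def by (rule prod_pos) (use eta_pos Box_nth in auto)

lemma weight_sum_pos: "0 < (\<Sum>h\<in>Gam M P. weight P eta h)"
  using replicate_in_Gam[of _ P M] finite_S weight_pos Gam_subset_Box[of M P]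
  by (intro sum_pos2[of _ "replicate P 0"]) (auto intro: less_imp_le)

lemma target_eq: "g \<in> Gam M P \<Longrightarrow> target M P eta g = target_weight g / (\<Sum>h\<in>Gam M P. weight P eta h)"
  by (simp add: target_def target_weight_def Gam_def)

lemma target_nonneg: "g \<in> Gam M P \<Longrightarrow> 0 \<le> target M P eta g"
  using weight_pos[of g] weight_sum_pos Gam_subset_Box[of M P] by (auto simp: target_def)

lemma target_sum: "(\<Sum>g\<in>Gam M P. target M P eta g) = 1"
  using weight_sum_pos by (simp add: target_def flip: sum_divide_distrib)

lemma invariant_on_target: "invariant_on (Gam M P) (target M P eta) (gibbs_kernel M P eta)"
  unfolding invariant_on_def
proof
  fix h assume h: "h \<in> Gam M P"
  have "(\<Sum>g\<in>Gam M P. target M P eta g * gibbs_kernel M P eta g h)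
      = (\<Sum>g\<in>Box M P. target_weight g * partial_sweep P g h) / (\<Sum>h\<in>Gam M P. weight P eta h)"
    unfolding sum_divide_distrib using h Gam_subset_Box[of M P]
    by (intro sum.mono_neutral_cong_left)
      (auto simp: finite_Box target_eq gibbs_kernel_eq_partial_sweep target_weight_def Gam_eq_Box)
  also have "\<dots> = target M P eta h"
    using invariant_on_partial_sweep[of P] h Gam_subset_Box[of M P]
    by (auto simp: invariant_on_def target_eq)
  finally show "(\<Sum>g\<in>Gam M P. target M P eta g * gibbs_kernel M P eta g h) = target M P eta h" .
qed

lemma gibbs_kernel_to_zeros_pos:
  assumes "g \<in> Gam M P"
  shows "0 < gibbs_kernel M P eta g (replicate P 0)"
proof -
  have g: "g \<in> Box M P" "length g = P" and zeros: "replicate P 0 \<in> Box M P"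
    using assms Gam_subset_Box[of M P] replicate_in_Gam[of 0 P M] by (auto simp: Box_def)
  have factor_pos: "0 < cp m (take m (replicate P 0) @ drop m g) (replicate P 0 ! m)" if "m < P" for m
    using that eta_pos[OF that, of 0] by (intro cond_prob_pos) (simp_all add: cond_w_eq)
  have "0 < (\<Prod>m<P. cp m (take m (replicate P 0) @ drop m g) (replicate P 0 ! m))"
    by (rule prod_pos) (rule factor_pos, simp)
  then show ?thesis
    using g replicate_in_Gam[of 0 P M]
    by (simp add: gibbs_kernel_eq_partial_sweep partial_sweep_eq[OF g(1) zeros])
qed

lemma gibbs_kernel_from_zeros_pos:
  assumes h: "h \<in> Gam M P"
  shows "0 < gibbs_kernel M P eta (replicate P 0) h"
proof -
  have hB: "h \<in> Box M P" and zeros: "replicate P 0 \<in> Box M P"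
    using h Gam_subset_Box[of M P] replicate_in_Gam[of 0 P M] by blast+
  have len: "length h = P" and "pos11 h"
    using h by (simp_all add: Gam_def)
  have factor_pos: "0 < cp m (take m h @ drop m (replicate P 0)) (h ! m)" if m: "m < P" for m
  proof -
    define d where "d = take m h @ drop m (replicate P (0::int))"
    have "\<not> (h ! m \<in> {1..int M} \<and> (\<exists>i\<in>{..<P} - {m}. h ! m = d ! i))"
    proof
      assume "h ! m \<in> {1..int M} \<and> (\<exists>i\<in>{..<P} - {m}. h ! m = d ! i)"
      then obtain i where i: "i < P" "i \<noteq> m" "h ! m = d ! i" and "0 < h ! m"
        by auto
      show False
      proof (cases "i < m")
        case True
        then have "h ! i = h ! m"
          using i len m by (simp add: d_def nth_append)
        then have "h ! i \<le> 0"
          using \<open>pos11 h\<close> i len m unfolding pos11_def by blast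
        then show False
          using \<open>h ! i = h ! m\<close> \<open>0 < h ! m\<close> by simp
      next
        case False
        then show False
          using i \<open>0 < h ! m\<close> len m by (simp add: d_def nth_append)
      qed
    qed
    then have "cw m d (h ! m) = eta m (h ! m)"
      unfolding cond_w_eq by (rule if_not_P)
    then show ?thesis
      using eta_pos[OF m Box_nth[OF hB m]] m unfolding d_def by (intro cond_prob_pos) simp_all
  qed
  have "0 < (\<Prod>m<P. cp m (take m h @ drop m (replicate P 0)) (h ! m))"
    by (rule prod_pos) (rule factor_pos, simp)
  then show ?thesis
    using h len by (simp add: gibbs_kernel_eq_partial_sweep[OF zeros] partial_sweep_eq[OF zeros hB])
qed

lemma gibbs_kernel_two_step_pos:
  assumes "g \<in> Gam M P" "h \<in> Gam M P"
  shows "0 < kernel_pow (Gam M P) (gibbs_kernel M P eta) 2 g h"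
proof -
  have "gibbs_kernel M P eta g (replicate P 0) * gibbs_kernel M P eta (replicate P 0) h
      \<le> kernel_comp (Gam M P) (gibbs_kernel M P eta) (gibbs_kernel M P eta) g h"
    unfolding kernel_comp_def using assms replicate_in_Gam[of 0 P M] stochastic
    by (intro member_le_sum) (auto simp: stochastic_on_def finite_S)
  moreover have "0 < gibbs_kernel M P eta g (replicate P 0) * gibbs_kernel M P eta (replicate P 0) h"
    using assms gibbs_kernel_to_zeros_pos gibbs_kernel_from_zeros_pos by simp
  ultimately show ?thesis
    using assms(1) kernel_pow_two by simp
qed

end

lemma gibbs_pow_eq_kernel_pow:
  "gibbs_pow M P eta j = kernel_pow (Gam M P) (gibbs_kernel M P eta) j"
  by (induction j) (simp_all add: fun_eq_iff id_kernel_def kernel_comp_def)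

theorem proposition3:
  fixes M P R :: nat
    and eta :: "nat \<Rightarrow> int \<Rightarrow> real"
    and PS rB :: "nat \<Rightarrow> real"
    and psi :: "nat \<Rightarrow> int \<Rightarrow> real"
  assumes "M \<ge> 1" and "P \<ge> 1" and "R \<le> P"
    and "\<And>i. i < R \<Longrightarrow> 0 < PS i \<and> PS i < 1"
    and "\<And>i j. i < P \<Longrightarrow> j \<in> {0..int M} \<Longrightarrow> psi i j > 0"
    and "\<And>i j. i < R \<Longrightarrow> j < 0 \<Longrightarrow> eta i j = 1 - PS i"
    and "\<And>i j. i < R \<Longrightarrow> j \<ge> 0 \<Longrightarrow> eta i j = PS i * psi i j"
    and "\<And>i j. R \<le> i \<Longrightarrow> i < P \<Longrightarrow> j < 0 \<Longrightarrow> eta i j = 1 - rB i"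
    and "\<And>i j. R \<le> i \<Longrightarrow> i < P \<Longrightarrow> j \<ge> 0 \<Longrightarrow> eta i j = rB i * psi i j"
    and "\<And>i j. i < P \<Longrightarrow> j \<in> {-1..int M} \<Longrightarrow> eta i j > 0"
  defines "\<beta> \<equiv> Min {gibbs_pow M P eta 2 g g' | g g'. g \<in> Gam M P \<and> g' \<in> Gam M P}"
  shows "\<beta> > 0 \<and>
    (\<forall>j\<ge>1. \<forall>g\<in>Gam M P. \<forall>g'\<in>Gam M P.
        \<bar>gibbs_pow M P eta j g g' - target M P eta g'\<bar> \<le> (1 - 2 * \<beta>) ^ (j div 2))"
proof -
  interpret gibbs_sampler M P eta
    using assms(10) by unfold_locales
  have "replicate P (-1) \<noteq> replicate P (0::int)"
    using assms(2) by (cases P) auto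
  then show ?thesis
    unfolding \<beta>_def gibbs_pow_eq_kernel_pow
    using kernel_pow_geometric_convergence[of "replicate P (-1)" "replicate P 0" "target M P eta"]
      replicate_in_Gam target_nonneg target_sum invariant_on_target gibbs_kernel_two_step_pos
    by simp
qed

end
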